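(* Let $G\subset\mathbb{R}^n$ be a convex body and $u\in\mathbb{S}^{n-1}$. For $t>0$ let $$C_t=\{x\in G: u\cdot x\ge h_G(u)-t\},\qquad S_t=G\cap\{x\in\mathbb{R}^n: u\cdot x=h_G(u)-t\}.$$ Then: (1) $d_{\mathcal H}(C_t,S_t)\ge t$; (2) $d_{\mathcal H}(C_t,S_t)\to 0$ as $t\to 0$; (3) $\mathrm{Vol}(G+C_t)-\mathrm{Vol}(G+S_t)\le 2^n\,\mathrm{Vol}(C_t)$.
   Context: A convex body is a compact convex set with non-empty interior. $h_G(u)=\max\{y\cdot u: y\in G\}$ is the support function. $d_{\mathcal H}$ is the Hausdorff distance, sums are Minkowski sums and $\mathrm{Vol}$ is Lebesgue measure. *)

theory Defs
  imports "HOL-Analysis.Analysis"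
begin

definition support_fun :: "'a::euclidean_space set \<Rightarrow> 'a \<Rightarrow> real" where
  "support_fun G u = (SUP y\<in>G. y \<bullet> u)"

definition hausdorff_dist :: "'a::metric_space set \<Rightarrow> 'a set \<Rightarrow> real" where
  "hausdorff_dist A B = max (SUP x\<in>A. infdist x B) (SUP y\<in>B. infdist y A)"

definition minkowski_sum :: "'a::real_vector set \<Rightarrow> 'a set \<Rightarrow> 'a set" where
  "minkowski_sum A B = {x + y | x y. x \<in> A \<and> y \<in> B}"

definition cap_set :: "'a::euclidean_space set \<Rightarrow> 'a \<Rightarrow> real \<Rightarrow> 'a set" where
  "cap_set G u t = {x \<in> G. u \<bullet> x \<ge> support_fun G u - t}"

definition section_set :: "'a::euclidean_space set \<Rightarrow> 'a \<Rightarrow> real \<Rightarrow> 'a set" where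
  "section_set G u t = G \<inter> {x. u \<bullet> x = support_fun G u - t}"

end

theory Submission
  imports Defs
begin

text \<open>
  Write \<open>h = h\<^sub>G(u)\<close>. (1) A maximiser of \<open>u \<bullet> x\<close> on \<open>G\<close> lies in \<open>C\<^sub>t\<close> at height \<open>h\<close>, while
  \<open>S\<^sub>t\<close> lies at height \<open>h - t\<close>, so it is at distance at least \<open>t\<close> from \<open>S\<^sub>t\<close>.
  (2) Fix an interior point \<open>z\<close>, which lies strictly below height \<open>h\<close>. The segment from a point
  \<open>y \<in> C\<^sub>t\<close> to \<open>z\<close> crosses height \<open>h - t\<close> after a fraction \<open>O(t)\<close> of its length, so every point
  of \<open>C\<^sub>t\<close> is \<open>O(t)\<close>-close to \<open>S\<^sub>t \<subseteq> C\<^sub>t\<close>.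
  (3) If \<open>x \<in> G\<close> lies below \<open>C\<^sub>t\<close> and \<open>y \<in> C\<^sub>t\<close>, the segment \<open>[x, y]\<close> meets \<open>S\<^sub>t\<close> in some \<open>p\<close>, and
  \<open>x + y = p + (x + y - p)\<close> with \<open>x + y - p \<in> [x, y] \<subseteq> G\<close>. Hence
  \<open>G + C\<^sub>t \<subseteq> (G + S\<^sub>t) \<union> (C\<^sub>t + C\<^sub>t)\<close>, and \<open>C\<^sub>t + C\<^sub>t = 2 C\<^sub>t\<close> by convexity.
\<close>

lemma inner_le_support_fun:
  fixes G :: "'a::euclidean_space set"
  assumes "bounded G" "y \<in> G"
  shows "y \<bullet> u \<le> support_fun G u"
proof -
  have "bounded ((\<lambda>y. y \<bullet> u) ` G)"
    using assms(1) by (intro bounded_linear_image) (auto intro: bounded_linear_inner_left)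
  then show ?thesis
    unfolding support_fun_def using assms(2) by (intro cSUP_upper bounded_imp_bdd_above)
qed

lemma support_fun_attained:
  fixes G :: "'a::euclidean_space set"
  assumes "compact G" "G \<noteq> {}"
  obtains x where "x \<in> G" "x \<bullet> u = support_fun G u"
proof -
  have "\<exists>x\<in>G. \<forall>y\<in>G. y \<bullet> u \<le> x \<bullet> u"
    by (rule continuous_attains_sup[OF assms]) (intro continuous_intros)
  then obtain x where x: "x \<in> G" "\<And>y. y \<in> G \<Longrightarrow> y \<bullet> u \<le> x \<bullet> u"
    by blast
  have "support_fun G u \<le> x \<bullet> u"
    unfolding support_fun_def using x assms(2) by (intro cSUP_least) auto
  moreover have "x \<bullet> u \<le> support_fun G u"
    using compact_imp_bounded[OF assms(1)] x(1) by (rule inner_le_support_fun)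
  ultimately have "support_fun G u = x \<bullet> u"
    by (rule antisym)
  with x that show ?thesis by simp
qed

lemma interior_inner_less_support_fun:
  fixes G :: "'a::euclidean_space set"
  assumes "bounded G" "z \<in> interior G" "norm u = 1"
  shows "z \<bullet> u < support_fun G u"
proof -
  obtain e where "e > 0" "ball z e \<subseteq> G"
    using assms(2) mem_interior by blast
  then have "z + (e/2) *\<^sub>R u \<in> G"
    using assms(3) by (auto simp: dist_norm)
  then have "(z + (e/2) *\<^sub>R u) \<bullet> u \<le> support_fun G u"
    by (rule inner_le_support_fun[OF assms(1)])
  moreover have "u \<bullet> u = 1"
    using assms(3) by (simp add: power2_norm_eq_inner[symmetric])
  ultimately show ?thesis
    using \<open>e > 0\<close> by (simp add: inner_add_left)
qed

lemma segment_point_at_level: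
  fixes x y u :: "'a::real_inner"
  assumes "u \<bullet> x < u \<bullet> y" "u \<bullet> x \<le> c" "c \<le> u \<bullet> y"
  obtains l where "0 \<le> l" "l \<le> 1" "u \<bullet> ((1 - l) *\<^sub>R x + l *\<^sub>R y) = c"
    and "(1 - l) * (u \<bullet> y - u \<bullet> x) = u \<bullet> y - c"
proof
  define l where "l = (c - u \<bullet> x) / (u \<bullet> y - u \<bullet> x)"
  show "0 \<le> l" "l \<le> 1"
    using assms by (auto simp: l_def divide_le_eq_1)
  have "l * (u \<bullet> y - u \<bullet> x) = c - u \<bullet> x"
    using assms(1) by (simp add: l_def)
  then show "u \<bullet> ((1 - l) *\<^sub>R x + l *\<^sub>R y) = c" "(1 - l) * (u \<bullet> y - u \<bullet> x) = u \<bullet> y - c"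
    by (simp_all add: inner_add_right algebra_simps)
qed

lemma hausdorff_dist_ge_infdist:
  fixes A B :: "'a::metric_space set"
  assumes "bounded A" "B \<noteq> {}" "x \<in> A"
  shows "infdist x B \<le> hausdorff_dist A B"
proof -
  obtain b where "b \<in> B"
    using assms(2) by blast
  have "bounded ((\<lambda>x. infdist x B) ` A)"
  proof (rule boundedI)
    fix r assume "r \<in> (\<lambda>x. infdist x B) ` A"
    then obtain y where "y \<in> A" "r = infdist y B"
      by blast
    then have "norm r \<le> dist y b"
      using \<open>b \<in> B\<close> by (simp add: infdist_nonneg infdist_le)
    also have "\<dots> \<le> dist y x + dist x b"
      by (rule dist_triangle)
    also have "\<dots> \<le> diameter A + dist x b"
      using assms(1,3) \<open>y \<in> A\<close> by (simp add: diameter_bounded_bound)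
    finally show "norm r \<le> diameter A + dist x b" .
  qed
  then have "infdist x B \<le> (SUP y\<in>A. infdist y B)"
    using assms(3) by (intro cSUP_upper bounded_imp_bdd_above)
  then show ?thesis
    unfolding hausdorff_dist_def by simp
qed

lemma hausdorff_dist_subset_le:
  fixes A B :: "'a::metric_space set"
  assumes "B \<subseteq> A" "B \<noteq> {}" "0 \<le> r" "\<And>x. x \<in> A \<Longrightarrow> \<exists>y\<in>B. dist x y \<le> r"
  shows "0 \<le> hausdorff_dist A B" "hausdorff_dist A B \<le> r"
proof -
  have "(SUP y\<in>B. infdist y A) = (SUP y\<in>B. 0::real)"
    using assms(1) by (intro SUP_cong) auto
  then have hd: "hausdorff_dist A B = max (SUP x\<in>A. infdist x B) 0"
    using assms(2) by (simp add: hausdorff_dist_def)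
  then show "0 \<le> hausdorff_dist A B"
    by simp
  have "(SUP x\<in>A. infdist x B) \<le> r"
    using assms(1,2,4) by (intro cSUP_least) (auto intro: infdist_le2)
  with hd assms(3) show "hausdorff_dist A B \<le> r"
    by simp
qed

lemma section_subset_cap: "section_set G u t \<subseteq> cap_set G u t"
  by (auto simp: section_set_def cap_set_def)

lemma hausdorff_dist_cap_section_ge:
  fixes G :: "'a::euclidean_space set"
  assumes "compact G" "norm u = 1" "t > 0" "section_set G u t \<noteq> {}"
  shows "t \<le> hausdorff_dist (cap_set G u t) (section_set G u t)"
proof -
  obtain x where x: "x \<in> G" "x \<bullet> u = support_fun G u"
    using support_fun_attained[OF assms(1)] assms(4) by (auto simp: section_set_def)
  have "t \<le> dist x s" if "s \<in> section_set G u t" for s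
  proof -
    have "t = u \<bullet> (x - s)"
      using that x by (simp add: section_set_def inner_diff_right inner_commute)
    also have "\<dots> \<le> norm u * norm (x - s)"
      by (rule norm_cauchy_schwarz)
    finally show ?thesis
      using assms(2) by (simp add: dist_norm)
  qed
  then have "t \<le> infdist x (section_set G u t)"
    using assms(4) by (simp add: infdist_notempty cINF_greatest)
  also have "\<dots> \<le> hausdorff_dist (cap_set G u t) (section_set G u t)"
  proof (rule hausdorff_dist_ge_infdist[OF _ assms(4)])
    show "bounded (cap_set G u t)"
      using compact_imp_bounded[OF assms(1)] by (rule bounded_subset) (auto simp: cap_set_def)
    show "x \<in> cap_set G u t"
      using x assms(3) by (simp add: cap_set_def inner_commute)
  qed
  finally show ?thesis .
qed

lemma cap_point_near_section:
  fixes G :: "'a::euclidean_space set"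
  assumes "convex G" "bounded G" "z \<in> G" "t < support_fun G u - z \<bullet> u"
    and "y \<in> cap_set G u t"
  obtains p where "p \<in> section_set G u t"
    and "dist y p \<le> t / (support_fun G u - t - z \<bullet> u) * diameter G"
proof -
  let ?c = "support_fun G u - t"
  have y: "y \<in> G" "?c \<le> u \<bullet> y"
    using assms(5) by (auto simp: cap_set_def)
  have "u \<bullet> y \<le> support_fun G u"
    using inner_le_support_fun[OF assms(2) y(1)] by (simp add: inner_commute)
  have below: "u \<bullet> z < ?c"
    using assms(4) by (simp add: inner_commute)
  obtain l where l: "0 \<le> l" "l \<le> 1" "u \<bullet> ((1 - l) *\<^sub>R z + l *\<^sub>R y) = ?c"
    and ratio: "(1 - l) * (u \<bullet> y - u \<bullet> z) = u \<bullet> y - ?c"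
    using segment_point_at_level[of u z y ?c] below y(2) by auto
  define p where "p = (1 - l) *\<^sub>R z + l *\<^sub>R y"
  have "p \<in> section_set G u t"
    using convexD[OF assms(1) assms(3) y(1)] l by (simp add: p_def section_set_def)
  moreover have "dist y p \<le> t / (support_fun G u - t - z \<bullet> u) * diameter G"
  proof -
    have "y - p = (1 - l) *\<^sub>R (y - z)"
      by (simp add: p_def algebra_simps)
    then have "dist y p = (1 - l) * dist y z"
      using l(2) by (simp add: dist_norm)
    also have "\<dots> \<le> t / (support_fun G u - t - z \<bullet> u) * diameter G"
    proof (rule mult_mono)
      have "1 - l = (u \<bullet> y - ?c) / (u \<bullet> y - u \<bullet> z)"
        using ratio below y(2) by (simp add: field_simps)
      also have "\<dots> \<le> t / (support_fun G u - t - z \<bullet> u)"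
        using below y(2) \<open>u \<bullet> y \<le> support_fun G u\<close>
        by (intro frac_le) (auto simp: inner_commute)
      finally show "1 - l \<le> t / (support_fun G u - t - z \<bullet> u)" .
      show "dist y z \<le> diameter G"
        using assms(2) y(1) assms(3) by (rule diameter_bounded_bound)
      show "0 \<le> t / (support_fun G u - t - z \<bullet> u)"
        using below y(2) \<open>u \<bullet> y \<le> support_fun G u\<close> by (simp add: inner_commute)
    qed (use l(2) in simp)
    finally show ?thesis .
  qed
  ultimately show ?thesis
    using that by blast
qed

lemma hausdorff_dist_cap_section_le:
  fixes G :: "'a::euclidean_space set"
  assumes "compact G" "convex G" "z \<in> G" "0 < t" "t < support_fun G u - z \<bullet> u"
  shows "0 \<le> hausdorff_dist (cap_set G u t) (section_set G u t)"
    and "hausdorff_dist (cap_set G u t) (section_set G u t)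
           \<le> t / (support_fun G u - t - z \<bullet> u) * diameter G"
proof -
  have bG: "bounded G"
    using assms(1) by (rule compact_imp_bounded)
  have near: "\<exists>p\<in>section_set G u t. dist y p \<le> t / (support_fun G u - t - z \<bullet> u) * diameter G"
    if "y \<in> cap_set G u t" for y
    using cap_point_near_section[OF assms(2) bG assms(3,5) that] by blast
  obtain x where "x \<in> G" "x \<bullet> u = support_fun G u"
    using support_fun_attained[OF assms(1)] assms(3) by blast
  then have "x \<in> cap_set G u t"
    using assms(4) by (simp add: cap_set_def inner_commute)
  then have "section_set G u t \<noteq> {}"
    using near by blast
  moreover have "0 \<le> t / (support_fun G u - t - z \<bullet> u) * diameter G"
    using assms(4,5) diameter_ge_0[OF bG] by simp
  ultimately show "0 \<le> hausdorff_dist (cap_set G u t) (section_set G u t)"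
    and "hausdorff_dist (cap_set G u t) (section_set G u t)
           \<le> t / (support_fun G u - t - z \<bullet> u) * diameter G"
    using hausdorff_dist_subset_le[OF section_subset_cap _ _ near] by auto
qed

lemma hausdorff_dist_cap_section_tendsto_0:
  fixes G :: "'a::euclidean_space set"
  assumes "compact G" "convex G" "interior G \<noteq> {}" "norm u = 1"
  shows "((\<lambda>t. hausdorff_dist (cap_set G u t) (section_set G u t)) \<longlongrightarrow> 0) (at_right 0)"
proof -
  obtain z where z: "z \<in> interior G"
    using assms(3) by blast
  define \<delta> where "\<delta> = support_fun G u - z \<bullet> u"
  have "\<delta> > 0"
    using interior_inner_less_support_fun[OF compact_imp_bounded[OF assms(1)] z assms(4)]
    by (simp add: \<delta>_def)
  have zG: "z \<in> G"
    using z interior_subset by blast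
  have "0 \<le> hausdorff_dist (cap_set G u t) (section_set G u t)
      \<and> hausdorff_dist (cap_set G u t) (section_set G u t) \<le> t / (\<delta> - t) * diameter G"
    if "0 < t" "t < \<delta>" for t
  proof -
    have t: "0 < t" "t < support_fun G u - z \<bullet> u"
      using that by (auto simp: \<delta>_def)
    have "support_fun G u - t - z \<bullet> u = \<delta> - t"
      by (simp add: \<delta>_def)
    then show ?thesis
      using hausdorff_dist_cap_section_le[OF assms(1,2) zG t] by (simp only:)
  qed
  then have ev: "eventually (\<lambda>t. 0 \<le> hausdorff_dist (cap_set G u t) (section_set G u t)
      \<and> hausdorff_dist (cap_set G u t) (section_set G u t) \<le> t / (\<delta> - t) * diameter G)
      (at_right 0)"
    unfolding eventually_at_right_field using \<open>\<delta> > 0\<close> by (intro exI[of _ \<delta>]) simp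
  have "((\<lambda>t. t / (\<delta> - t) * diameter G) \<longlongrightarrow> 0 / (\<delta> - 0) * diameter G) (at_right 0)"
    using \<open>\<delta> > 0\<close> by (intro tendsto_intros) auto
  then have lim: "((\<lambda>t. t / (\<delta> - t) * diameter G) \<longlongrightarrow> 0) (at_right 0)"
    by simp
  show ?thesis
  proof (rule tendsto_sandwich[OF _ _ tendsto_const lim])
    show "\<forall>\<^sub>F t in at_right 0. 0 \<le> hausdorff_dist (cap_set G u t) (section_set G u t)"
      using ev by (rule eventually_mono) simp
    show "\<forall>\<^sub>F t in at_right 0. hausdorff_dist (cap_set G u t) (section_set G u t)
        \<le> t / (\<delta> - t) * diameter G"
      using ev by (rule eventually_mono) simp
  qed
qed

lemma compact_minkowski_sum:
  fixes A B :: "'a::real_normed_vector set"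
  assumes "compact A" "compact B"
  shows "compact (minkowski_sum A B)"
  unfolding minkowski_sum_def using compact_sums[OF assms] .

lemma minkowski_sum_convex_self:
  assumes "convex C"
  shows "minkowski_sum C C = (\<lambda>x. 2 *\<^sub>R x) ` C"
proof
  show "minkowski_sum C C \<subseteq> (\<lambda>x. 2 *\<^sub>R x) ` C"
  proof
    fix w assume "w \<in> minkowski_sum C C"
    then obtain x y where w: "w = x + y" "x \<in> C" "y \<in> C"
      by (auto simp: minkowski_sum_def)
    then have "(1/2) *\<^sub>R x + (1/2) *\<^sub>R y \<in> C"
      using convexD[OF assms, of x y "1/2" "1/2"] by simp
    moreover have "w = 2 *\<^sub>R ((1/2) *\<^sub>R x + (1/2) *\<^sub>R y)"
      using w(1) by (simp add: algebra_simps)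
    ultimately show "w \<in> (\<lambda>x. 2 *\<^sub>R x) ` C"
      by blast
  qed
  show "(\<lambda>x. 2 *\<^sub>R x) ` C \<subseteq> minkowski_sum C C"
    by (auto simp: minkowski_sum_def scaleR_2)
qed

lemma minkowski_sum_cap_subset:
  fixes G :: "'a::euclidean_space set"
  assumes "convex G"
  shows "minkowski_sum G (cap_set G u t)
    \<subseteq> minkowski_sum G (section_set G u t) \<union> minkowski_sum (cap_set G u t) (cap_set G u t)"
proof
  let ?c = "support_fun G u - t"
  fix w assume "w \<in> minkowski_sum G (cap_set G u t)"
  then obtain x y where w: "w = x + y" "x \<in> G" "y \<in> G" "?c \<le> u \<bullet> y"
    by (auto simp: minkowski_sum_def cap_set_def)
  show "w \<in> minkowski_sum G (section_set G u t) \<union> minkowski_sum (cap_set G u t) (cap_set G u t)"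
  proof (cases "?c \<le> u \<bullet> x")
    case True
    then show ?thesis
      using w by (auto simp: minkowski_sum_def cap_set_def)
  next
    case False
    then obtain l where l: "0 \<le> l" "l \<le> 1" "u \<bullet> ((1 - l) *\<^sub>R x + l *\<^sub>R y) = ?c"
      using segment_point_at_level[of u x y ?c] w(4) by auto
    have "(1 - l) *\<^sub>R x + l *\<^sub>R y \<in> section_set G u t"
      using convexD[OF assms w(2,3)] l by (simp add: section_set_def)
    moreover have "l *\<^sub>R x + (1 - l) *\<^sub>R y \<in> G"
      using convexD[OF assms w(2,3)] l by simp
    moreover have "w = (l *\<^sub>R x + (1 - l) *\<^sub>R y) + ((1 - l) *\<^sub>R x + l *\<^sub>R y)"
      using w(1) by (simp add: algebra_simps)
    ultimately show ?thesis
      by (auto simp: minkowski_sum_def)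
  qed
qed

lemma measure_minkowski_sum_cap_section_le:
  fixes G :: "'a::euclidean_space set"
  assumes "compact G" "convex G"
  shows "measure lebesgue (minkowski_sum G (cap_set G u t))
           - measure lebesgue (minkowski_sum G (section_set G u t))
         \<le> 2 ^ DIM('a) * measure lebesgue (cap_set G u t)"
proof -
  let ?C = "cap_set G u t" and ?S = "section_set G u t"
  have "?C = G \<inter> {x. support_fun G u - t \<le> u \<bullet> x}" "?S = G \<inter> {x. u \<bullet> x = support_fun G u - t}"
    by (auto simp: cap_set_def section_set_def)
  then have C: "compact ?C" "convex ?C" and S: "compact ?S"
    using assms closed_halfspace_ge closed_hyperplane convex_halfspace_ge
    by (metis compact_Int_closed convex_Int)+
  have GS: "minkowski_sum G ?S \<in> lmeasurable" and CC: "minkowski_sum ?C ?C \<in> lmeasurable"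
    and GC: "minkowski_sum G ?C \<in> lmeasurable"
    using assms(1) C(1) S by (auto intro: lmeasurable_compact compact_minkowski_sum)
  have "measure lebesgue (minkowski_sum G ?C)
      \<le> measure lebesgue (minkowski_sum G ?S \<union> minkowski_sum ?C ?C)"
    using GS CC GC minkowski_sum_cap_subset[OF assms(2)] by (intro measure_mono_fmeasurable) auto
  also have "\<dots> \<le> measure lebesgue (minkowski_sum G ?S) + measure lebesgue (minkowski_sum ?C ?C)"
    using GS CC by (intro measure_Un_le) auto
  also have "measure lebesgue (minkowski_sum ?C ?C) = 2 ^ DIM('a) * measure lebesgue ?C"
    using measure_lebesgue_affine[of 2 0 ?C] by (simp add: minkowski_sum_convex_self[OF C(2)])
  finally show ?thesis
    by simp
qed

theorem lemma4p2:
  fixes G :: "'a::euclidean_space set" and u :: 'a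
  assumes "compact G" and "convex G" and "interior G \<noteq> {}"
    and "norm u = 1"
  shows "(\<forall>t>0. section_set G u t \<noteq> {} \<longrightarrow>
            hausdorff_dist (cap_set G u t) (section_set G u t) \<ge> t)
       \<and> ((\<lambda>t. hausdorff_dist (cap_set G u t) (section_set G u t)) \<longlongrightarrow> 0) (at_right 0)
       \<and> (\<forall>t>0. measure lebesgue (minkowski_sum G (cap_set G u t))
                 - measure lebesgue (minkowski_sum G (section_set G u t))
               \<le> 2 ^ DIM('a) * measure lebesgue (cap_set G u t))"
  using hausdorff_dist_cap_section_ge[OF assms(1,4)]
    hausdorff_dist_cap_section_tendsto_0[OF assms]
    measure_minkowski_sum_cap_section_le[OF assms(1,2)]
  by blast

end
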